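(* Let $\tau$ be an abstract path and let $x$ be a marker of $\tau$ at which one of the gluing moves Ia, Ib, II applies. Then the glued abstract path $\tilde q(\tau,x)$ satisfies $w(\tilde q(\tau,x))=w(\tau)-1$.
   Context: $\mathbb F=\{0,1\}$, $\mathbb N=\{0,1,2,\dots\}$. Abstract vertex types: $o$ (interior), $u$ (unstable), $s$ (stable); $u,s$ are boundary. An abstract edge is $\varepsilon=(\mu,(o_1,u_1,s_1),(o_2,u_2,s_2))\in\mathbb F\times\mathbb N^3\times\mathbb N^3$ such that if $\mu=0$ then $s_1=u_2=0$, and if $\mu=1$ then $o_1=o_2=0$ (interior if $\mu=0$, boundary if $\mu=1$; it has $X_1$ incoming and $X_2$ outgoing ends of type $X$). Its weight is $w(\varepsilon)=1$ if $\mu=0$ and $2-s_1-u_2$ if $\mu=1$. An abstract path $\tau=(T,\tau,\sigma)$: a non-empty finite directed tree $T=(V,E)$ (nodes; arrows, also called breaks; arrow $e$ from $s(e)$ to $t(e)$), $\tau:V\to$ abstract edges, $\sigma:E\to\{o,u,s\}$, such that for each node $v$ and type $X$, $X_1(v)\ge|\{e:t(e)=v,\sigma(e)=X\}|$ and $X_2(v)\ge|\{e:s(e)=v,\sigma(e)=X\}|$, where $X_i(v)$ are the entries of $\tau(v)$. Ends of $\tau$: $X_1(\tau)=\sum_vX_1(v)-|\sigma^{-1}(X)|$, $X_2(\tau)=\sum_vX_2(v)-|\sigma^{-1}(X)|$. Nodes are interior/boundary by $\mu(v)$. $\tau$ is legal if $s_1(\tau)=u_2(\tau)=0$. The restriction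 to a non-empty subtree is a subpath. Weight $w(\tau)=\sum_vw(\tau(v))$. $\mathrm{Star}^o(v)$ is the subtree induced by $v$ and its adjacent interior nodes. Gluing: contract a subtree $T'$ to a node $v^*$ (arrows between $T'$ and the rest reattached to $v^*$ with the same types; other data unchanged) and set $\tau(v^* )=(\mu^*,(o_1(\tau'),u_1(\tau'),s_1(\tau')),(o_2(\tau'),u_2(\tau'),s_2(\tau')))$ where $\tau'$ is the subpath on $T'$. Moves: (Ia) at an arrow both of whose endpoints are interior: contract that arrow, $\mu^*=0$; (Ib) at a boundary node $v$ whose subpath on $\mathrm{Star}^o(v)$ is legal: contract $\mathrm{Star}^o(v)$, $\mu^*=0$; (II) at an arrow both of whose endpoints are boundary: contract it, $\mu^*=1$. A marker is a node or an arrow; at most one move applies at a given marker, and the result is denoted $\tilde q(\tau,x)$. *)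

theory Defs
  imports Main
begin

datatype vtype = TO | TU | TS   \<comment> \<open>o (interior), u (unstable), s (stable)\<close>

text \<open>An abstract edge (mu, (o1,u1,s1), (o2,u2,s2)); mu ranges over F = {0,1}.\<close>
type_synonym aedge = "nat \<times> (nat \<times> nat \<times> nat) \<times> (nat \<times> nat \<times> nat)"

definition emu :: "aedge \<Rightarrow> nat" where "emu \<epsilon> = fst \<epsilon>"

fun tri :: "nat \<times> nat \<times> nat \<Rightarrow> vtype \<Rightarrow> nat" where
  "tri (a, b, c) TO = a" | "tri (a, b, c) TU = b" | "tri (a, b, c) TS = c"

text \<open>X_1 (incoming ends of type X) and X_2 (outgoing ends of type X).\<close>
definition ein :: "aedge \<Rightarrow> vtype \<Rightarrow> nat" where "ein \<epsilon> X = tri (fst (snd \<epsilon>)) X"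
definition eout :: "aedge \<Rightarrow> vtype \<Rightarrow> nat" where "eout \<epsilon> X = tri (snd (snd \<epsilon>)) X"

definition abstract_edge :: "aedge \<Rightarrow> bool" where
  "abstract_edge \<epsilon> \<longleftrightarrow> emu \<epsilon> \<le> 1
     \<and> (emu \<epsilon> = 0 \<longrightarrow> ein \<epsilon> TS = 0 \<and> eout \<epsilon> TU = 0)
     \<and> (emu \<epsilon> = 1 \<longrightarrow> ein \<epsilon> TO = 0 \<and> eout \<epsilon> TO = 0)"

definition eweight :: "aedge \<Rightarrow> int" where
  "eweight \<epsilon> = (if emu \<epsilon> = 0 then 1 else 2 - int (ein \<epsilon> TS) - int (eout \<epsilon> TU))"

record ('v, 'e) apath =
  nodes :: "'v set"
  arrows :: "'e set"
  src :: "'e \<Rightarrow> 'v"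
  tgt :: "'e \<Rightarrow> 'v"
  lab :: "'v \<Rightarrow> aedge"
  sig :: "'e \<Rightarrow> vtype"

definition adj :: "('v, 'e) apath \<Rightarrow> ('v \<times> 'v) set" where
  "adj \<tau> = {(src \<tau> e, tgt \<tau> e) | e. e \<in> arrows \<tau>} \<union> {(tgt \<tau> e, src \<tau> e) | e. e \<in> arrows \<tau>}"

definition is_tree :: "('v, 'e) apath \<Rightarrow> bool" where
  "is_tree \<tau> \<longleftrightarrow> finite (nodes \<tau>) \<and> nodes \<tau> \<noteq> {} \<and> finite (arrows \<tau>)
     \<and> (\<forall>e \<in> arrows \<tau>. src \<tau> e \<in> nodes \<tau> \<and> tgt \<tau> e \<in> nodes \<tau>)
     \<and> card (arrows \<tau>) + 1 = card (nodes \<tau>)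
     \<and> (\<forall>u \<in> nodes \<tau>. \<forall>v \<in> nodes \<tau>. (u, v) \<in> (adj \<tau>)\<^sup>*)"

definition abstract_path :: "('v, 'e) apath \<Rightarrow> bool" where
  "abstract_path \<tau> \<longleftrightarrow> is_tree \<tau>
     \<and> (\<forall>v \<in> nodes \<tau>. abstract_edge (lab \<tau> v))
     \<and> (\<forall>v \<in> nodes \<tau>. \<forall>X.
          ein (lab \<tau> v) X \<ge> card {e \<in> arrows \<tau>. tgt \<tau> e = v \<and> sig \<tau> e = X}
        \<and> eout (lab \<tau> v) X \<ge> card {e \<in> arrows \<tau>. src \<tau> e = v \<and> sig \<tau> e = X})"

definition pweight :: "('v, 'e) apath \<Rightarrow> int" where
  "pweight \<tau> = (\<Sum>v \<in> nodes \<tau>. eweight (lab \<tau> v))"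

definition sub_arrows :: "('v, 'e) apath \<Rightarrow> 'v set \<Rightarrow> 'e set" where
  "sub_arrows \<tau> W = {e \<in> arrows \<tau>. src \<tau> e \<in> W \<and> tgt \<tau> e \<in> W}"

definition sub_in :: "('v, 'e) apath \<Rightarrow> 'v set \<Rightarrow> vtype \<Rightarrow> nat" where
  "sub_in \<tau> W X = (\<Sum>v \<in> W. ein (lab \<tau> v) X) - card {e \<in> sub_arrows \<tau> W. sig \<tau> e = X}"
definition sub_out :: "('v, 'e) apath \<Rightarrow> 'v set \<Rightarrow> vtype \<Rightarrow> nat" where
  "sub_out \<tau> W X = (\<Sum>v \<in> W. eout (lab \<tau> v) X) - card {e \<in> sub_arrows \<tau> W. sig \<tau> e = X}"

definition sub_legal :: "('v, 'e) apath \<Rightarrow> 'v set \<Rightarrow> bool" where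
  "sub_legal \<tau> W \<longleftrightarrow> sub_in \<tau> W TS = 0 \<and> sub_out \<tau> W TU = 0"

definition interior :: "('v, 'e) apath \<Rightarrow> 'v \<Rightarrow> bool" where
  "interior \<tau> v \<longleftrightarrow> emu (lab \<tau> v) = 0"
definition boundary :: "('v, 'e) apath \<Rightarrow> 'v \<Rightarrow> bool" where
  "boundary \<tau> v \<longleftrightarrow> emu (lab \<tau> v) = 1"

definition star_o :: "('v, 'e) apath \<Rightarrow> 'v \<Rightarrow> 'v set" where
  "star_o \<tau> v = insert v {w \<in> nodes \<tau>. interior \<tau> w \<and> (v, w) \<in> adj \<tau>}"

definition glue :: "('v, 'e) apath \<Rightarrow> 'v set \<Rightarrow> 'v \<Rightarrow> nat \<Rightarrow> ('v, 'e) apath" where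
  "glue \<tau> W r m =
    (let f = (\<lambda>v. if v \<in> W then r else v) in
     \<lparr> nodes = (nodes \<tau> - W) \<union> {r},
       arrows = arrows \<tau> - sub_arrows \<tau> W,
       src = (\<lambda>e. f (src \<tau> e)),
       tgt = (\<lambda>e. f (tgt \<tau> e)),
       lab = (\<lambda>v. if v = r then
                   (m, (sub_in \<tau> W TO, sub_in \<tau> W TU, sub_in \<tau> W TS),
                       (sub_out \<tau> W TO, sub_out \<tau> W TU, sub_out \<tau> W TS))
                 else lab \<tau> v),
       sig = sig \<tau> \<rparr>)"

datatype ('v, 'e) marker = MNode 'v | MArrow 'e

definition is_marker :: "('v, 'e) apath \<Rightarrow> ('v, 'e) marker \<Rightarrow> bool" where
  "is_marker \<tau> x = (case x of MNode v \<Rightarrow> v \<in> nodes \<tau> | MArrow e \<Rightarrow> e \<in> arrows \<tau>)"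

definition move_Ia :: "('v, 'e) apath \<Rightarrow> 'e \<Rightarrow> bool" where
  "move_Ia \<tau> e \<longleftrightarrow> e \<in> arrows \<tau> \<and> interior \<tau> (src \<tau> e) \<and> interior \<tau> (tgt \<tau> e)"
definition move_Ib :: "('v, 'e) apath \<Rightarrow> 'v \<Rightarrow> bool" where
  "move_Ib \<tau> v \<longleftrightarrow> v \<in> nodes \<tau> \<and> boundary \<tau> v \<and> sub_legal \<tau> (star_o \<tau> v)"
definition move_II :: "('v, 'e) apath \<Rightarrow> 'e \<Rightarrow> bool" where
  "move_II \<tau> e \<longleftrightarrow> e \<in> arrows \<tau> \<and> boundary \<tau> (src \<tau> e) \<and> boundary \<tau> (tgt \<tau> e)"

definition move_applies :: "('v, 'e) apath \<Rightarrow> ('v, 'e) marker \<Rightarrow> bool" where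
  "move_applies \<tau> x = (case x of MNode v \<Rightarrow> move_Ib \<tau> v
                                | MArrow e \<Rightarrow> move_Ia \<tau> e \<or> move_II \<tau> e)"

definition q_tilde :: "('v, 'e) apath \<Rightarrow> ('v, 'e) marker \<Rightarrow> ('v, 'e) apath" where
  "q_tilde \<tau> x = (case x of
      MNode v \<Rightarrow> glue \<tau> (star_o \<tau> v) v 0
    | MArrow e \<Rightarrow> (if move_Ia \<tau> e
                   then glue \<tau> {src \<tau> e, tgt \<tau> e} (src \<tau> e) 0
                   else glue \<tau> {src \<tau> e, tgt \<tau> e} (src \<tau> e) 1))"

end

theory Submission
  imports Defs
begin

text \<open>
  Gluing replaces the weights of the glued nodes by the weight of one new node, so only the
  glued subpath matters. Since the abstract path is a tree, a set W of nodes spans at most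
  |W| - 1 arrows; this is proved by contracting W, which keeps the graph connected, and
  using that a connected graph has at most one node more than it has arrows.
  For (Ia) two interior nodes of weight 1 become one. For (II) the two boundary nodes are
  joined by a single arrow, whose type (u or s, never o at a boundary node) cancels exactly
  one end, and 2 - s_1 - u_2 drops by one. For (Ib) the arrows of Star^o(v) all meet v,
  there are as many as interior neighbours, and legality forces v's incoming s-ends and
  outgoing u-ends to be exactly these arrows; so the weight 2 - s_1 - u_2 of v and the
  weights 1 of its neighbours add up to 2, replaced by the interior weight 1.
\<close>

lemma glue_simps:
  "nodes (glue \<tau> W r m) = (nodes \<tau> - W) \<union> {r}"
  "arrows (glue \<tau> W r m) = arrows \<tau> - sub_arrows \<tau> W"
  "src (glue \<tau> W r m) e = (if src \<tau> e \<in> W then r else src \<tau> e)"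
  "tgt (glue \<tau> W r m) e = (if tgt \<tau> e \<in> W then r else tgt \<tau> e)"
  "lab (glue \<tau> W r m) v = (if v = r then
                   (m, (sub_in \<tau> W TO, sub_in \<tau> W TU, sub_in \<tau> W TS),
                       (sub_out \<tau> W TO, sub_out \<tau> W TU, sub_out \<tau> W TS))
                 else lab \<tau> v)"
  by (simp_all add: glue_def Let_def)

lemma eweight_glue:
  "eweight (lab (glue \<tau> W r m) r) =
     (if m = 0 then 1 else 2 - int (sub_in \<tau> W TS) - int (sub_out \<tau> W TU))"
  by (simp add: glue_simps eweight_def emu_def ein_def eout_def)

lemma pweight_glue:
  assumes "finite (nodes \<tau>)" and "W \<subseteq> nodes \<tau>" and "r \<in> W"
  shows "pweight (glue \<tau> W r m) =
           pweight \<tau> - (\<Sum>w\<in>W. eweight (lab \<tau> w)) + eweight (lab (glue \<tau> W r m) r)"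
proof -
  let ?g = "glue \<tau> W r m"
  have nodes: "nodes ?g = insert r (nodes \<tau> - W)"
    using assms(3) by (auto simp: glue_simps)
  have "pweight ?g = eweight (lab ?g r) + (\<Sum>v\<in>nodes \<tau> - W. eweight (lab ?g v))"
    unfolding pweight_def nodes using assms by simp
  also have "(\<Sum>v\<in>nodes \<tau> - W. eweight (lab ?g v)) =
             (\<Sum>v\<in>nodes \<tau> - W. eweight (lab \<tau> v))"
    using assms(3) by (intro sum.cong) (auto simp: glue_simps)
  also have "\<dots> = pweight \<tau> - (\<Sum>w\<in>W. eweight (lab \<tau> w))"
    unfolding pweight_def by (simp add: sum.subset_diff[OF assms(2,1)])
  finally show ?thesis by simp
qed

lemma card_nodes_glue:
  assumes "finite (nodes \<tau>)" and "W \<subseteq> nodes \<tau>" and "r \<in> W"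
  shows "card (nodes (glue \<tau> W r m)) + card W = card (nodes \<tau>) + 1"
proof -
  have "nodes (glue \<tau> W r m) = insert r (nodes \<tau> - W)" using assms(3) by (auto simp: glue_simps)
  moreover have "finite W" using assms(1,2) finite_subset by blast
  ultimately show ?thesis using assms card_mono[OF assms(1,2)] by (simp add: card_Diff_subset)
qed

lemma card_arrows_glue:
  assumes "finite (arrows \<tau>)"
  shows "card (arrows (glue \<tau> W r m)) + card (sub_arrows \<tau> W) = card (arrows \<tau>)"
proof -
  have sub: "sub_arrows \<tau> W \<subseteq> arrows \<tau>" by (auto simp: sub_arrows_def)
  then have "finite (sub_arrows \<tau> W)" using assms finite_subset by blast
  then show ?thesis
    using assms sub card_mono[OF assms sub] by (simp add: glue_simps card_Diff_subset)
qed

subsection \<open>Connected graphs and trees\<close>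

definition finite_connected :: "('v, 'e) apath \<Rightarrow> bool" where
  "finite_connected \<tau> \<longleftrightarrow> finite (nodes \<tau>) \<and> finite (arrows \<tau>)
     \<and> (\<forall>e \<in> arrows \<tau>. src \<tau> e \<in> nodes \<tau> \<and> tgt \<tau> e \<in> nodes \<tau>)
     \<and> (\<forall>u \<in> nodes \<tau>. \<forall>v \<in> nodes \<tau>. (u, v) \<in> (adj \<tau>)\<^sup>*)"

lemma is_tree_finite_connected: "is_tree \<tau> \<Longrightarrow> finite_connected \<tau>"
  by (simp add: is_tree_def finite_connected_def)

lemma adj_rtrancl_glue:
  assumes "(u, v) \<in> (adj \<tau>)\<^sup>*"
  shows "(if u \<in> W then r else u, if v \<in> W then r else v) \<in> (adj (glue \<tau> W r m))\<^sup>*"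
  using assms
proof (induction rule: rtrancl_induct)
  case base
  show ?case by simp
next
  case (step y z)
  let ?f = "\<lambda>v. if v \<in> W then r else v"
  obtain e where e: "e \<in> arrows \<tau>"
    and yz: "(y, z) = (src \<tau> e, tgt \<tau> e) \<or> (y, z) = (tgt \<tau> e, src \<tau> e)"
    using step.hyps(2) unfolding adj_def by blast
  have "?f y = ?f z \<or> (?f y, ?f z) \<in> adj (glue \<tau> W r m)"
  proof (cases "e \<in> sub_arrows \<tau> W")
    case True
    then show ?thesis using yz by (auto simp: sub_arrows_def)
  next
    case False
    then show ?thesis using e yz unfolding adj_def glue_simps by blast
  qed
  then show ?case using step.IH by (auto intro: rtrancl_into_rtrancl)
qed

lemma finite_connected_glue:
  assumes "finite_connected \<tau>" and "W \<subseteq> nodes \<tau>" and "r \<in> W"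
  shows "finite_connected (glue \<tau> W r m)"
  unfolding finite_connected_def
proof (intro conjI ballI)
  let ?g = "glue \<tau> W r m"
  show "finite (nodes ?g)" "finite (arrows ?g)"
    using assms(1) by (simp_all add: finite_connected_def glue_simps)
  show "src ?g e \<in> nodes ?g" "tgt ?g e \<in> nodes ?g" if "e \<in> arrows ?g" for e
    using that assms(1) by (auto simp: finite_connected_def glue_simps)
  show "(u, v) \<in> (adj ?g)\<^sup>*" if "u \<in> nodes ?g" "v \<in> nodes ?g" for u v
  proof -
    have "u \<in> nodes \<tau>" "v \<in> nodes \<tau>" using that assms(2,3) by (auto simp: glue_simps)
    then have "(u, v) \<in> (adj \<tau>)\<^sup>*" using assms(1) by (simp add: finite_connected_def)
    moreover have "(if w \<in> W then r else w) = w" if "w \<in> nodes ?g" for w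
      using that by (auto simp: glue_simps)
    ultimately show ?thesis using adj_rtrancl_glue[of u v \<tau> W r m] that by simp
  qed
qed

lemma finite_connected_card_nodes:
  "finite_connected \<tau> \<Longrightarrow> card (nodes \<tau>) \<le> card (arrows \<tau>) + 1"
proof (induction "card (arrows \<tau>)" arbitrary: \<tau> rule: less_induct)
  case less
  have fin: "finite (nodes \<tau>)" "finite (arrows \<tau>)"
    using less.prems by (auto simp: finite_connected_def)
  show ?case
  proof (cases "\<exists>e \<in> arrows \<tau>. src \<tau> e \<noteq> tgt \<tau> e")
    case True
    then obtain e where e: "e \<in> arrows \<tau>" "src \<tau> e \<noteq> tgt \<tau> e" by blast
    let ?W = "{src \<tau> e, tgt \<tau> e}"
    let ?g = "glue \<tau> ?W (src \<tau> e) 0"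
    have W: "?W \<subseteq> nodes \<tau>" using less.prems e by (auto simp: finite_connected_def)
    have "e \<in> sub_arrows \<tau> ?W" using e by (simp add: sub_arrows_def)
    then have glued: "card (sub_arrows \<tau> ?W) \<noteq> 0"
      using fin(2) by (auto simp: sub_arrows_def)
    then have "card (arrows ?g) < card (arrows \<tau>)"
      using card_arrows_glue[OF fin(2), of ?W "src \<tau> e" 0] by linarith
    moreover have "finite_connected ?g" using finite_connected_glue[OF less.prems W] by simp
    ultimately have "card (nodes ?g) \<le> card (arrows ?g) + 1" by (rule less.hyps)
    moreover have "card ?W = 2" using e(2) by simp
    ultimately show ?thesis
      using card_nodes_glue[OF fin(1) W insertI1, of 0]
        card_arrows_glue[OF fin(2), of ?W "src \<tau> e" 0] glued
      by linarith
  next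
    case False
    then have "adj \<tau> \<subseteq> Id" unfolding adj_def by auto
    then have "(adj \<tau>)\<^sup>* \<subseteq> Id" by (metis rtrancl__Id rtrancl_mono)
    then have "card (nodes \<tau>) \<le> 1"
      using less.prems by (auto simp: finite_connected_def card_le_Suc0_iff_eq)
    then show ?thesis by simp
  qed
qed

lemma is_tree_card_sub_arrows:
  assumes "is_tree \<tau>" and "W \<subseteq> nodes \<tau>" and "W \<noteq> {}"
  shows "card (sub_arrows \<tau> W) < card W"
proof -
  obtain r where r: "r \<in> W" using assms(3) by blast
  have conn: "finite_connected \<tau>" using assms(1) by (rule is_tree_finite_connected)
  then have fin: "finite (nodes \<tau>)" "finite (arrows \<tau>)" by (auto simp: finite_connected_def)
  have "card (nodes (glue \<tau> W r 0)) \<le> card (arrows (glue \<tau> W r 0)) + 1"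
    using finite_connected_card_nodes[OF finite_connected_glue[OF conn assms(2) r]] .
  moreover have "card W \<noteq> 0" using assms(2,3) fin(1) finite_subset by fastforce
  ultimately show ?thesis
    using card_nodes_glue[OF fin(1) assms(2) r, of 0] card_arrows_glue[OF fin(2), of W r 0]
      assms(1)
    by (simp add: is_tree_def)
qed

lemma is_tree_no_loop:
  assumes "is_tree \<tau>" and "e \<in> arrows \<tau>"
  shows "src \<tau> e \<noteq> tgt \<tau> e"
proof
  assume loop: "src \<tau> e = tgt \<tau> e"
  have "{src \<tau> e} \<subseteq> nodes \<tau>" using assms by (simp add: is_tree_def)
  from is_tree_card_sub_arrows[OF assms(1) this]
  have "card (sub_arrows \<tau> {src \<tau> e}) = 0" by simp
  moreover have "finite (sub_arrows \<tau> {src \<tau> e})"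
    using assms(1) by (simp add: is_tree_def sub_arrows_def)
  moreover have "e \<in> sub_arrows \<tau> {src \<tau> e}" using assms(2) loop by (simp add: sub_arrows_def)
  ultimately show False by auto
qed

lemma is_tree_sub_arrows_ends:
  assumes "is_tree \<tau>" and "e \<in> arrows \<tau>"
  shows "sub_arrows \<tau> {src \<tau> e, tgt \<tau> e} = {e}"
proof -
  let ?W = "{src \<tau> e, tgt \<tau> e}"
  have "?W \<subseteq> nodes \<tau>" using assms by (simp add: is_tree_def)
  from is_tree_card_sub_arrows[OF assms(1) this]
  have "card (sub_arrows \<tau> ?W) \<le> 1" using is_tree_no_loop[OF assms] by simp
  moreover have "finite (sub_arrows \<tau> ?W)"
    using assms(1) by (simp add: is_tree_def sub_arrows_def)
  moreover have "e \<in> sub_arrows \<tau> ?W" using assms(2) by (simp add: sub_arrows_def)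
  ultimately show ?thesis by (auto simp: card_le_Suc0_iff_eq)
qed

lemma card_star_o_le:
  assumes "finite (arrows \<tau>)"
  shows "card (star_o \<tau> v - {v}) \<le>
           card {e \<in> sub_arrows \<tau> (star_o \<tau> v). src \<tau> e = v \<or> tgt \<tau> e = v}"
proof -
  let ?W = "star_o \<tau> v"
  let ?I = "{e \<in> sub_arrows \<tau> ?W. src \<tau> e = v \<or> tgt \<tau> e = v}"
  let ?other_end = "\<lambda>e. if src \<tau> e = v then tgt \<tau> e else src \<tau> e"
  have "?W - {v} \<subseteq> ?other_end ` ?I"
  proof
    fix w assume w: "w \<in> ?W - {v}"
    then obtain e where "e \<in> arrows \<tau>"
      and "(src \<tau> e, tgt \<tau> e) = (v, w) \<or> (src \<tau> e, tgt \<tau> e) = (w, v)"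
      by (auto simp: star_o_def adj_def)
    then show "w \<in> ?other_end ` ?I"
      using w by (intro image_eqI[of _ _ e]) (auto simp: sub_arrows_def star_o_def)
  qed
  moreover have "finite ?I" using assms by (simp add: sub_arrows_def)
  ultimately have "card (?W - {v}) \<le> card (?other_end ` ?I)"
    by (intro card_mono finite_imageI)
  also have "\<dots> \<le> card ?I" by (rule card_image_le) fact
  finally show ?thesis .
qed

lemma abstract_path_card_arrows_le:
  assumes "abstract_path \<tau>" and "v \<in> nodes \<tau>"
  shows "card {e \<in> arrows \<tau>. src \<tau> e = v \<and> sig \<tau> e = X} \<le> eout (lab \<tau> v) X"
    and "card {e \<in> arrows \<tau>. tgt \<tau> e = v \<and> sig \<tau> e = X} \<le> ein (lab \<tau> v) X"
  using assms by (simp_all add: abstract_path_def)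

lemma abstract_path_ends_arrow:
  assumes "abstract_path \<tau>" and "e \<in> arrows \<tau>"
  shows "1 \<le> eout (lab \<tau> (src \<tau> e)) (sig \<tau> e)"
    and "1 \<le> ein (lab \<tau> (tgt \<tau> e)) (sig \<tau> e)"
proof -
  have fin: "finite (arrows \<tau>)" and ends: "src \<tau> e \<in> nodes \<tau>" "tgt \<tau> e \<in> nodes \<tau>"
    using assms by (auto simp: abstract_path_def is_tree_def)
  have "0 < card {e' \<in> arrows \<tau>. src \<tau> e' = src \<tau> e \<and> sig \<tau> e' = sig \<tau> e}"
    using assms(2) fin by (auto simp: card_gt_0_iff)
  then show "1 \<le> eout (lab \<tau> (src \<tau> e)) (sig \<tau> e)"
    using abstract_path_card_arrows_le(1)[OF assms(1) ends(1), of "sig \<tau> e"] by linarith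
  have "0 < card {e' \<in> arrows \<tau>. tgt \<tau> e' = tgt \<tau> e \<and> sig \<tau> e' = sig \<tau> e}"
    using assms(2) fin by (auto simp: card_gt_0_iff)
  then show "1 \<le> ein (lab \<tau> (tgt \<tau> e)) (sig \<tau> e)"
    using abstract_path_card_arrows_le(2)[OF assms(1) ends(2), of "sig \<tau> e"] by linarith
qed

lemma abstract_path_interior_ends:
  assumes "abstract_path \<tau>" and "v \<in> nodes \<tau>" and "interior \<tau> v"
  shows "ein (lab \<tau> v) TS = 0" and "eout (lab \<tau> v) TU = 0"
  using assms by (auto simp: abstract_path_def abstract_edge_def interior_def)

lemma abstract_path_boundary_ends:
  assumes "abstract_path \<tau>" and "v \<in> nodes \<tau>" and "boundary \<tau> v"
  shows "ein (lab \<tau> v) TO = 0" and "eout (lab \<tau> v) TO = 0"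
  using assms by (auto simp: abstract_path_def abstract_edge_def boundary_def)

lemma abstract_path_sig_boundary:
  assumes "abstract_path \<tau>" and "e \<in> arrows \<tau>"
    and "boundary \<tau> (src \<tau> e) \<or> boundary \<tau> (tgt \<tau> e)"
  shows "sig \<tau> e = TS \<or> sig \<tau> e = TU"
proof -
  have "src \<tau> e \<in> nodes \<tau>" "tgt \<tau> e \<in> nodes \<tau>"
    using assms(1,2) by (auto simp: abstract_path_def is_tree_def)
  then have "sig \<tau> e \<noteq> TO"
    using assms abstract_path_ends_arrow[OF assms(1,2)] abstract_path_boundary_ends[OF assms(1)]
    by (metis not_one_le_zero)
  then show ?thesis by (cases "sig \<tau> e") auto
qed

lemma sub_in_sub_out_single_arrow:
  assumes "a \<noteq> b" and "sub_arrows \<tau> {a, b} = {e}"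
  shows "sub_in \<tau> {a, b} X =
           ein (lab \<tau> a) X + ein (lab \<tau> b) X - (if sig \<tau> e = X then 1 else 0)"
    and "sub_out \<tau> {a, b} X =
           eout (lab \<tau> a) X + eout (lab \<tau> b) X - (if sig \<tau> e = X then 1 else 0)"
proof -
  have "{e' \<in> sub_arrows \<tau> {a, b}. sig \<tau> e' = X} = (if sig \<tau> e = X then {e} else {})"
    using assms(2) by auto
  with assms(1)
  show "sub_in \<tau> {a, b} X =
          ein (lab \<tau> a) X + ein (lab \<tau> b) X - (if sig \<tau> e = X then 1 else 0)"
    and "sub_out \<tau> {a, b} X =
          eout (lab \<tau> a) X + eout (lab \<tau> b) X - (if sig \<tau> e = X then 1 else 0)"
    by (simp_all add: sub_in_def sub_out_def)
qed

subsection \<open>The three moves\<close>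

lemma pweight_move_Ia:
  assumes "abstract_path \<tau>" and "move_Ia \<tau> e"
  shows "pweight (glue \<tau> {src \<tau> e, tgt \<tau> e} (src \<tau> e) 0) = pweight \<tau> - 1"
proof -
  have tree: "is_tree \<tau>" and e: "e \<in> arrows \<tau>"
    and "interior \<tau> (src \<tau> e)" "interior \<tau> (tgt \<tau> e)"
    using assms by (auto simp: abstract_path_def move_Ia_def)
  moreover have "src \<tau> e \<noteq> tgt \<tau> e" using is_tree_no_loop[OF tree e] .
  ultimately have "(\<Sum>w\<in>{src \<tau> e, tgt \<tau> e}. eweight (lab \<tau> w)) = 2"
    by (simp add: eweight_def interior_def)
  moreover have "{src \<tau> e, tgt \<tau> e} \<subseteq> nodes \<tau>" "finite (nodes \<tau>)"
    using tree e by (auto simp: is_tree_def)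
  ultimately show ?thesis by (simp add: pweight_glue eweight_glue)
qed

lemma pweight_move_II:
  assumes "abstract_path \<tau>" and "move_II \<tau> e"
  shows "pweight (glue \<tau> {src \<tau> e, tgt \<tau> e} (src \<tau> e) 1) = pweight \<tau> - 1"
proof -
  let ?a = "src \<tau> e" and ?b = "tgt \<tau> e"
  let ?W = "{?a, ?b}"
  have tree: "is_tree \<tau>" and e: "e \<in> arrows \<tau>" and "boundary \<tau> ?a" "boundary \<tau> ?b"
    using assms by (auto simp: abstract_path_def move_II_def)
  then have mu: "emu (lab \<tau> ?a) = 1" "emu (lab \<tau> ?b) = 1"
    and sig: "sig \<tau> e = TS \<or> sig \<tau> e = TU"
    using abstract_path_sig_boundary[OF assms(1) e] by (auto simp: boundary_def)
  have ab: "?a \<noteq> ?b" using is_tree_no_loop[OF tree e] .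
  note ends = sub_in_sub_out_single_arrow[OF ab is_tree_sub_arrows_ends[OF tree e]]
  have "int (sub_in \<tau> ?W TS) + int (sub_out \<tau> ?W TU) + 1 =
          int (ein (lab \<tau> ?a) TS) + int (ein (lab \<tau> ?b) TS)
        + int (eout (lab \<tau> ?a) TU) + int (eout (lab \<tau> ?b) TU)"
    using sig
  proof
    assume "sig \<tau> e = TS"
    then show ?thesis using abstract_path_ends_arrow(2)[OF assms(1) e] by (simp add: ends)
  next
    assume "sig \<tau> e = TU"
    then show ?thesis using abstract_path_ends_arrow(1)[OF assms(1) e] by (simp add: ends)
  qed
  moreover have "(\<Sum>w\<in>?W. eweight (lab \<tau> w)) =
          (2 - int (ein (lab \<tau> ?a) TS) - int (eout (lab \<tau> ?a) TU))
        + (2 - int (ein (lab \<tau> ?b) TS) - int (eout (lab \<tau> ?b) TU))"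
    using ab mu by (simp add: eweight_def)
  moreover have "?W \<subseteq> nodes \<tau>" "finite (nodes \<tau>)" using tree e by (auto simp: is_tree_def)
  then have "pweight (glue \<tau> ?W ?a 1) = pweight \<tau> - (\<Sum>w\<in>?W. eweight (lab \<tau> w))
               + (2 - int (sub_in \<tau> ?W TS) - int (sub_out \<tau> ?W TU))"
    using pweight_glue[of \<tau> ?W ?a 1] by (simp add: eweight_glue)
  ultimately show ?thesis by linarith
qed

text \<open>
  Under legality the incoming s-ends and outgoing u-ends of v are exactly the s- and u-typed
  arrows of Star^o(v): these arrows can only end, respectively start, at the boundary node v.
\<close>

lemma legal_star_o_ends:
  assumes "abstract_path \<tau>" and "move_Ib \<tau> v"
  shows "ein (lab \<tau> v) TS = card {e \<in> sub_arrows \<tau> (star_o \<tau> v). sig \<tau> e = TS}"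
    and "eout (lab \<tau> v) TU = card {e \<in> sub_arrows \<tau> (star_o \<tau> v). sig \<tau> e = TU}"
proof -
  let ?W = "star_o \<tau> v"
  have v: "v \<in> nodes \<tau>" and legal: "sub_legal \<tau> ?W"
    using assms(2) by (auto simp: move_Ib_def)
  have fin: "finite (nodes \<tau>)" "finite (arrows \<tau>)"
    using assms(1) by (auto simp: abstract_path_def is_tree_def)
  have nbr: "w \<in> nodes \<tau>" "interior \<tau> w" if "w \<in> ?W - {v}" for w
    using that by (auto simp: star_o_def)
  have fW: "finite ?W" "v \<in> ?W" using fin(1) by (auto simp: star_o_def)
  have ein_W: "(\<Sum>w\<in>?W. ein (lab \<tau> w) TS) = ein (lab \<tau> v) TS"
    and eout_W: "(\<Sum>w\<in>?W. eout (lab \<tau> w) TU) = eout (lab \<tau> v) TU"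
    using abstract_path_interior_ends[OF assms(1) nbr] by (simp_all add: sum.remove[OF fW])
  have into_v: "{e \<in> sub_arrows \<tau> ?W. sig \<tau> e = TS} \<subseteq>
                 {e \<in> arrows \<tau>. tgt \<tau> e = v \<and> sig \<tau> e = TS}"
    using abstract_path_ends_arrow(2)[OF assms(1)] abstract_path_interior_ends(1)[OF assms(1) nbr]
    by (force simp: sub_arrows_def)
  have "card {e \<in> sub_arrows \<tau> ?W. sig \<tau> e = TS} \<le> ein (lab \<tau> v) TS"
    using fin(2) abstract_path_card_arrows_le(2)[OF assms(1) v]
    by (intro order_trans[OF card_mono[OF _ into_v]]) simp_all
  then show "ein (lab \<tau> v) TS = card {e \<in> sub_arrows \<tau> ?W. sig \<tau> e = TS}"
    using legal by (simp add: sub_legal_def sub_in_def ein_W)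
  have from_v: "{e \<in> sub_arrows \<tau> ?W. sig \<tau> e = TU} \<subseteq>
                 {e \<in> arrows \<tau>. src \<tau> e = v \<and> sig \<tau> e = TU}"
    using abstract_path_ends_arrow(1)[OF assms(1)] abstract_path_interior_ends(2)[OF assms(1) nbr]
    by (force simp: sub_arrows_def)
  have "card {e \<in> sub_arrows \<tau> ?W. sig \<tau> e = TU} \<le> eout (lab \<tau> v) TU"
    using fin(2) abstract_path_card_arrows_le(1)[OF assms(1) v]
    by (intro order_trans[OF card_mono[OF _ from_v]]) simp_all
  then show "eout (lab \<tau> v) TU = card {e \<in> sub_arrows \<tau> ?W. sig \<tau> e = TU}"
    using legal by (simp add: sub_legal_def sub_out_def eout_W)
qed

lemma move_Ib_card_star_o:
  assumes "abstract_path \<tau>" and "move_Ib \<tau> v"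
  shows "ein (lab \<tau> v) TS + eout (lab \<tau> v) TU = card (star_o \<tau> v - {v})"
proof -
  let ?W = "star_o \<tau> v"
  let ?S = "sub_arrows \<tau> ?W"
  let ?ST = "{e \<in> ?S. sig \<tau> e = TS}" and ?SU = "{e \<in> ?S. sig \<tau> e = TU}"
  have tree: "is_tree \<tau>" and v: "v \<in> nodes \<tau>" "boundary \<tau> v"
    using assms by (auto simp: abstract_path_def move_Ib_def)
  have fin: "finite (nodes \<tau>)" "finite (arrows \<tau>)" using tree by (auto simp: is_tree_def)
  have fS: "finite ?S" using fin(2) by (simp add: sub_arrows_def)
  have W: "?W \<subseteq> nodes \<tau>" and vW: "v \<in> ?W" using v(1) by (auto simp: star_o_def)
  have "{e \<in> ?S. src \<tau> e = v \<or> tgt \<tau> e = v} \<subseteq> ?ST \<union> ?SU"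
    using abstract_path_sig_boundary[OF assms(1)] v(2) by (auto simp: sub_arrows_def)
  then have "card {e \<in> ?S. src \<tau> e = v \<or> tgt \<tau> e = v} \<le> card (?ST \<union> ?SU)"
    using fS by (intro card_mono) auto
  then have "card (?W - {v}) \<le> card (?ST \<union> ?SU)"
    using card_star_o_le[OF fin(2), of v] by linarith
  moreover have "card (?ST \<union> ?SU) \<le> card ?S" using fS by (intro card_mono) auto
  moreover have "card ?S < card ?W"
    using is_tree_card_sub_arrows[OF tree W] vW by blast
  moreover have "card ?W = card (?W - {v}) + 1"
    using card_Suc_Diff1[OF finite_subset[OF W fin(1)] vW] by simp
  moreover have "card (?ST \<union> ?SU) = card ?ST + card ?SU"
    using fS by (intro card_Un_disjoint) auto
  ultimately show ?thesis using legal_star_o_ends[OF assms] by linarith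
qed

lemma pweight_move_Ib:
  assumes "abstract_path \<tau>" and "move_Ib \<tau> v"
  shows "pweight (glue \<tau> (star_o \<tau> v) v 0) = pweight \<tau> - 1"
proof -
  let ?W = "star_o \<tau> v"
  have fin: "finite (nodes \<tau>)" using assms(1) by (simp add: abstract_path_def is_tree_def)
  have v: "v \<in> ?W" "boundary \<tau> v" and W: "?W \<subseteq> nodes \<tau>"
    using assms(2) by (auto simp: move_Ib_def star_o_def)
  have fW: "finite ?W" using W fin finite_subset by blast
  have "(\<Sum>w\<in>?W - {v}. eweight (lab \<tau> w)) = (\<Sum>w\<in>?W - {v}. 1)"
    by (rule sum.cong) (auto simp: eweight_def star_o_def interior_def)
  then have "(\<Sum>w\<in>?W. eweight (lab \<tau> w)) = eweight (lab \<tau> v) + int (card (?W - {v}))"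
    using sum.remove[OF fW v(1), of "\<lambda>w. eweight (lab \<tau> w)"] by simp
  also have "\<dots> = 2"
    using move_Ib_card_star_o[OF assms] v(2) by (simp add: eweight_def boundary_def)
  finally show ?thesis using pweight_glue[OF fin W v(1)] by (simp add: eweight_glue)
qed

theorem lemma3p8:
  fixes \<tau> :: "('v, 'e) apath" and x :: "('v, 'e) marker"
  assumes "abstract_path \<tau>" and "is_marker \<tau> x" and "move_applies \<tau> x"
  shows "pweight (q_tilde \<tau> x) = pweight \<tau> - 1"
proof (cases x)
  case (MNode v)
  then show ?thesis using assms pweight_move_Ib by (simp add: q_tilde_def move_applies_def)
next
  case (MArrow e)
  then consider "move_Ia \<tau> e" | "\<not> move_Ia \<tau> e" "move_II \<tau> e"
    using assms(3) by (auto simp: move_applies_def)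
  then show ?thesis
    using MArrow assms(1) pweight_move_Ia pweight_move_II by cases (simp_all add: q_tilde_def)
qed

end
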